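(* Let $(A,B)$ be a finite-dimensional associative superalgebra over an algebraically closed field $\mathbb{K}$ of characteristic zero endowed with a homogeneous symmetric structure $B$. Then $A$ is an orthogonal (with respect to $B$) direct sum of $B$-irreducible graded two-sided ideals.
   Context: A superalgebra is $\mathbb{Z}_2$-graded, $A=A_{\bar 0}\oplus A_{\bar 1}$, $A_\alpha A_\beta\subseteq A_{\alpha+\beta}$. A homogeneous symmetric structure on $A$ is a bilinear form $B$ which is either even ($B(A_{\bar 0},A_{\bar 1})=0$) or odd ($B(A_{\bar 0},A_{\bar 0})=B(A_{\bar 1},A_{\bar 1})=0$), and is supersymmetric ($B(x,y)=(-1)^{|x||y|}B(y,x)$ for homogeneous $x,y$), associative ($B(xy,z)=B(x,yz)$) and non-degenerate. A graded two-sided ideal $I$ of $A$ is non-degenerate if $B|_{I\times I}$ is non-degenerate, and it is $B$-irreducible if it is non-degenerate and contains no non-degenerate graded two-sided ideal of $A$ other than $\{0\}$ and $I$. *)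

theory Defs
  imports "HOL-Computational_Algebra.Polynomial"
begin

definition fin_dim_assoc_superalgebra ::
  "('k::field \<Rightarrow> 'v::ab_group_add \<Rightarrow> 'v) \<Rightarrow> ('v \<Rightarrow> 'v \<Rightarrow> 'v) \<Rightarrow> 'v set \<Rightarrow> 'v set \<Rightarrow> bool" where
  "fin_dim_assoc_superalgebra sc mul A0 A1 \<longleftrightarrow>
     vector_space sc \<and>
     (\<exists>Basis. finite_dimensional_vector_space sc Basis) \<and>
     (\<forall>x. Vector_Spaces.linear sc sc (mul x)) \<and>
     (\<forall>y. Vector_Spaces.linear sc sc (\<lambda>x. mul x y)) \<and>
     (\<forall>x y z. mul (mul x y) z = mul x (mul y z)) \<and>
     module.subspace sc A0 \<and> module.subspace sc A1 \<and>
     A0 \<inter> A1 = {0} \<and> (\<forall>v. \<exists>a\<in>A0. \<exists>b\<in>A1. v = a + b) \<and>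
     (\<forall>x\<in>A0. \<forall>y\<in>A0. mul x y \<in> A0) \<and>
     (\<forall>x\<in>A0. \<forall>y\<in>A1. mul x y \<in> A1) \<and>
     (\<forall>x\<in>A1. \<forall>y\<in>A0. mul x y \<in> A1) \<and>
     (\<forall>x\<in>A1. \<forall>y\<in>A1. mul x y \<in> A0)"

definition bilinear_form :: "('k::field \<Rightarrow> 'v::ab_group_add \<Rightarrow> 'v) \<Rightarrow> ('v \<Rightarrow> 'v \<Rightarrow> 'k) \<Rightarrow> bool" where
  "bilinear_form sc B \<longleftrightarrow>
     (\<forall>x. Vector_Spaces.linear sc (*) (B x)) \<and> (\<forall>y. Vector_Spaces.linear sc (*) (\<lambda>x. B x y))"

definition nondeg_on :: "('v::zero \<Rightarrow> 'v \<Rightarrow> 'k::zero) \<Rightarrow> 'v set \<Rightarrow> bool" where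
  "nondeg_on B I \<longleftrightarrow> (\<forall>x\<in>I. (\<forall>y\<in>I. B x y = 0) \<longrightarrow> x = 0)"

definition homogeneous_symmetric_structure ::
  "('k::field \<Rightarrow> 'v::ab_group_add \<Rightarrow> 'v) \<Rightarrow> ('v \<Rightarrow> 'v \<Rightarrow> 'v) \<Rightarrow> 'v set \<Rightarrow> 'v set
     \<Rightarrow> ('v \<Rightarrow> 'v \<Rightarrow> 'k) \<Rightarrow> bool" where
  "homogeneous_symmetric_structure sc mul A0 A1 B \<longleftrightarrow>
     bilinear_form sc B \<and>
     ((\<forall>x\<in>A0. \<forall>y\<in>A1. B x y = 0) \<or>
      ((\<forall>x\<in>A0. \<forall>y\<in>A0. B x y = 0) \<and> (\<forall>x\<in>A1. \<forall>y\<in>A1. B x y = 0))) \<and>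
     (\<forall>x\<in>A0. \<forall>y\<in>A0. B x y = B y x) \<and>
     (\<forall>x\<in>A0. \<forall>y\<in>A1. B x y = B y x) \<and>
     (\<forall>x\<in>A1. \<forall>y\<in>A0. B x y = B y x) \<and>
     (\<forall>x\<in>A1. \<forall>y\<in>A1. B x y = - B y x) \<and>
     (\<forall>x y z. B (mul x y) z = B x (mul y z)) \<and>
     nondeg_on B UNIV"

definition graded_ideal ::
  "('k::field \<Rightarrow> 'v::ab_group_add \<Rightarrow> 'v) \<Rightarrow> ('v \<Rightarrow> 'v \<Rightarrow> 'v) \<Rightarrow> 'v set \<Rightarrow> 'v set \<Rightarrow> 'v set \<Rightarrow> bool" where
  "graded_ideal sc mul A0 A1 I \<longleftrightarrow>
     module.subspace sc I \<and>
     (\<forall>x\<in>I. \<exists>a\<in>I \<inter> A0. \<exists>b\<in>I \<inter> A1. x = a + b) \<and>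
     (\<forall>a x. x \<in> I \<longrightarrow> mul a x \<in> I \<and> mul x a \<in> I)"

definition B_irreducible ::
  "('k::field \<Rightarrow> 'v::ab_group_add \<Rightarrow> 'v) \<Rightarrow> ('v \<Rightarrow> 'v \<Rightarrow> 'v) \<Rightarrow> 'v set \<Rightarrow> 'v set
     \<Rightarrow> ('v \<Rightarrow> 'v \<Rightarrow> 'k) \<Rightarrow> 'v set \<Rightarrow> bool" where
  "B_irreducible sc mul A0 A1 B I \<longleftrightarrow>
     graded_ideal sc mul A0 A1 I \<and> nondeg_on B I \<and>
     (\<forall>J. graded_ideal sc mul A0 A1 J \<and> nondeg_on B J \<and> J \<subseteq> I \<longrightarrow> J = {0} \<or> J = I)"

end

theory Submission
  imports Defs
begin

text \<open>A nonzero non-degenerate graded ideal \<open>I\<close> of minimal dimension inside a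
  non-degenerate graded ideal \<open>J\<close> is \<open>B\<close>-irreducible. Because \<open>B\<close> is homogeneous and
  supersymmetric, the left and right orthogonals of a graded ideal coincide, and by
  associativity of \<open>B\<close> this orthogonal \<open>I\<^sup>\<bottom>\<close> is again a graded ideal. Non-degeneracy on \<open>I\<close>
  gives \<open>J = I \<oplus> (J \<inter> I\<^sup>\<bottom>)\<close> with \<open>J \<inter> I\<^sup>\<bottom>\<close> non-degenerate and of smaller dimension, so
  induction on the dimension yields the decomposition; the components are unique because
  the summands are pairwise orthogonal and each is non-degenerate.\<close>

context finite_dimensional_vector_space
begin

lemma dim_le_dim_Int_kernel_Suc:
  assumes W: "subspace W" and f: "Vector_Spaces.linear scale (*) f"
  shows "dim W \<le> Suc (dim (W \<inter> {x. f x = 0}))"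
proof (cases "\<forall>w\<in>W. f w = 0")
  case True
  then have "W \<inter> {x. f x = 0} = W" by blast
  then show ?thesis by simp
next
  case False
  interpret f: Vector_Spaces.linear scale "(*)" f by (fact f)
  let ?K = "W \<inter> {x. f x = 0}"
  obtain w0 where w0: "w0 \<in> W" "f w0 \<noteq> 0" using False by blast
  have "W \<subseteq> span (insert w0 ?K)"
  proof
    fix w assume w: "w \<in> W"
    define c where "c = f w / f w0"
    have "w - c *s w0 \<in> ?K"
      using w w0 W by (simp add: c_def f.diff f.scale subspace_diff subspace_scale)
    then have "(w - c *s w0) + c *s w0 \<in> span (insert w0 ?K)"
      by (intro span_add span_scale) (simp_all add: span_base)
    then show "w \<in> span (insert w0 ?K)" by simp
  qed
  then have "dim W \<le> dim (insert w0 ?K)" by (rule dim_mono)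
  also have "\<dots> \<le> Suc (dim ?K)" by (simp add: dim_insert)
  finally show ?thesis .
qed

lemma dim_le_dim_Int_common_kernel:
  assumes "finite E" and "\<And>e. e \<in> E \<Longrightarrow> Vector_Spaces.linear scale (*) (\<phi> e)"
    and "subspace W"
  shows "dim W \<le> dim (W \<inter> {x. \<forall>e\<in>E. \<phi> e x = 0}) + card E"
  using assms
proof (induction E arbitrary: W rule: finite_induct)
  case empty
  then show ?case by simp
next
  case (insert e E)
  let ?W' = "W \<inter> {x. \<phi> e x = 0}"
  interpret \<phi>: Vector_Spaces.linear scale "(*)" "\<phi> e" using insert.prems by simp
  have "subspace ?W'" using insert.prems(2) \<phi>.subspace_kernel by (rule subspace_inter)
  then have "dim ?W' \<le> dim (?W' \<inter> {x. \<forall>e\<in>E. \<phi> e x = 0}) + card E"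
    using insert.IH insert.prems(1) by blast
  moreover have "?W' \<inter> {x. \<forall>e\<in>E. \<phi> e x = 0} = W \<inter> {x. \<forall>e\<in>insert e E. \<phi> e x = 0}"
    by auto
  ultimately show ?case
    using dim_le_dim_Int_kernel_Suc[OF insert.prems(2) \<phi>.linear_axioms] insert.hyps by simp
qed

lemma sums_eq_UNIV_if_dimension_le:
  assumes "subspace S" "subspace T" "S \<inter> T = {0}" "dimension \<le> dim S + dim T"
  shows "{x + y |x y. x \<in> S \<and> y \<in> T} = UNIV"
proof -
  let ?ST = "{x + y |x y. x \<in> S \<and> y \<in> T}"
  have "dim (S \<inter> T) = 0" unfolding assms(3) by simp
  then have "dimension \<le> dim ?ST" using dim_sums_Int[OF assms(1,2)] assms(4) by linarith
  then have "dim ?ST = dimension" using dim_subset_UNIV[of ?ST] by (rule antisym[rotated])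
  then have "span ?ST = UNIV" by (simp only: dim_eq_full)
  moreover have "span ?ST = ?ST" using subspace_sums[OF assms(1,2)] by (rule span_eq_iff[THEN iffD2])
  ultimately show ?thesis by simp
qed

end

locale finite_dimensional_bilinear_space = finite_dimensional_vector_space sc Basis
  for sc :: "'k::field \<Rightarrow> 'v::ab_group_add \<Rightarrow> 'v" and Basis +
  fixes B :: "'v \<Rightarrow> 'v \<Rightarrow> 'k"
  assumes bilinear: "bilinear_form sc B"
begin

lemma linear_B_left: "Vector_Spaces.linear sc (*) (\<lambda>x. B x y)"
  using bilinear unfolding bilinear_form_def by blast

lemma linear_B_right: "Vector_Spaces.linear sc (*) (B x)"
  using bilinear unfolding bilinear_form_def by blast

lemma B_add_left: "B (x + x') y = B x y + B x' y"
  using linear_B_left unfolding Vector_Spaces.linear_iff by blast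

lemma B_add_right: "B x (y + y') = B x y + B x y'"
  using linear_B_right unfolding Vector_Spaces.linear_iff by blast

lemma B_scale_left: "B (sc c x) y = c * B x y"
  using linear_B_left unfolding Vector_Spaces.linear_iff by blast

lemma B_scale_right: "B x (sc c y) = c * B x y"
  using linear_B_right unfolding Vector_Spaces.linear_iff by blast

lemma B_zero_left [simp]: "B 0 y = 0"
  using B_scale_left[of 0 0 y] by simp

lemma B_zero_right [simp]: "B x 0 = 0"
  using B_scale_right[of x 0 0] by simp

lemma B_sum_left: "B (sum f S) y = (\<Sum>s\<in>S. B (f s) y)"
  by (induction S rule: infinite_finite_induct) (simp_all add: B_add_left)

lemma left_orthogonal_complement:
  assumes I: "subspace I" and nondeg: "nondeg_on B I"
  obtains u w where "u \<in> I" "\<forall>x\<in>I. B w x = 0" "v = u + w"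
proof -
  let ?L = "{w. \<forall>x\<in>I. B w x = 0}"
  obtain b where b: "finite b" "b \<subseteq> I" "span b = I" "card b = dim I"
    using basis_subspace_exists[OF I] by blast
  have L: "subspace ?L"
    by (rule subspaceI) (auto simp: B_add_left B_scale_left)
  have kernel_b: "{w. \<forall>e\<in>b. B w e = 0} \<subseteq> ?L"
  proof safe
    fix w x assume w: "\<forall>e\<in>b. B w e = 0" and x: "x \<in> I"
    have "span b \<subseteq> {x. B w x = 0}"
      by (rule span_minimal) (use w in \<open>auto intro!: subspaceI simp: B_add_right B_scale_right\<close>)
    then show "B w x = 0" using x b(3) by blast
  qed
  \<comment> \<open>\<open>?L\<close> is cut out by the \<open>dim I\<close> functionals \<open>B _ e\<close>, \<open>e \<in> b\<close>, so has codimension at most \<open>dim I\<close>\<close>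
  have "dimension \<le> dim {w. \<forall>e\<in>b. B w e = 0} + card b"
    using dim_le_dim_Int_common_kernel[where \<phi> = "\<lambda>e w. B w e", OF b(1) linear_B_left subspace_UNIV]
    by (simp add: dimension_def)
  also have "\<dots> \<le> dim I + dim ?L" using dim_subset[OF kernel_b] b(4) by simp
  finally have "dimension \<le> dim I + dim ?L" .
  moreover have "I \<inter> ?L = {0}"
    using nondeg subspace_0[OF I] subspace_0[OF L] unfolding nondeg_on_def by auto
  ultimately have "{u + w |u w. u \<in> I \<and> w \<in> ?L} = UNIV"
    using sums_eq_UNIV_if_dimension_le[OF I L] by blast
  then show ?thesis using that by blast
qed

lemma orthogonal_sum_unique:
  assumes fin: "finite \<I>"
    and sub: "\<And>I. I \<in> \<I> \<Longrightarrow> subspace I"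
    and nondeg: "\<And>I. I \<in> \<I> \<Longrightarrow> nondeg_on B I"
    and orth: "pairwise (\<lambda>I J. \<forall>x\<in>I. \<forall>y\<in>J. B x y = 0) \<I>"
    and f: "\<And>I. I \<in> \<I> \<Longrightarrow> f I \<in> I" and g: "\<And>I. I \<in> \<I> \<Longrightarrow> g I \<in> I"
    and eq: "(\<Sum>I\<in>\<I>. f I) = (\<Sum>I\<in>\<I>. g I)"
    and I: "I \<in> \<I>"
  shows "f I = g I"
proof -
  have d: "f J - g J \<in> J" if "J \<in> \<I>" for J
    using sub f g that by (simp add: subspace_diff)
  have "B (f I - g I) y = 0" if y: "y \<in> I" for y
  proof -
    have "0 = B (\<Sum>J\<in>\<I>. f J - g J) y" using eq by (simp add: sum_subtractf)
    also have "\<dots> = (\<Sum>J\<in>\<I>. if J = I then B (f I - g I) y else 0)"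
      unfolding B_sum_left
    proof (rule sum.cong[OF refl])
      fix J assume "J \<in> \<I>"
      then show "B (f J - g J) y = (if J = I then B (f I - g I) y else 0)"
        using orth d[of J] y I unfolding pairwise_def by auto
    qed
    also have "\<dots> = B (f I - g I) y" using fin I by simp
    finally show ?thesis by simp
  qed
  then have "f I - g I = 0" using nondeg[OF I] d[OF I] unfolding nondeg_on_def by blast
  then show ?thesis by simp
qed

end

locale superalgebra_with_symmetric_structure = finite_dimensional_vector_space sc Basis
  for sc :: "'k::field \<Rightarrow> 'v::ab_group_add \<Rightarrow> 'v" and Basis +
  fixes mul :: "'v \<Rightarrow> 'v \<Rightarrow> 'v" and A0 A1 :: "'v set" and B :: "'v \<Rightarrow> 'v \<Rightarrow> 'k"
  assumes superalgebra: "fin_dim_assoc_superalgebra sc mul A0 A1"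
    and symmetric_structure: "homogeneous_symmetric_structure sc mul A0 A1 B"
begin

sublocale finite_dimensional_bilinear_space sc Basis B
  using symmetric_structure unfolding homogeneous_symmetric_structure_def
  by unfold_locales blast

lemma subspace_A0: "subspace A0" and subspace_A1: "subspace A1"
  and A0_Int_A1: "A0 \<inter> A1 = {0}"
  using superalgebra unfolding fin_dim_assoc_superalgebra_def by blast+

lemma homogeneous_decomposition:
  obtains v0 v1 where "v0 \<in> A0" "v1 \<in> A1" "v = v0 + v1"
  using superalgebra unfolding fin_dim_assoc_superalgebra_def by blast

lemma homogeneous_decomposition_unique:
  assumes "a \<in> A0" "a' \<in> A0" "b \<in> A1" "b' \<in> A1" "a + b = a' + b'"
  shows "a = a'" and "b = b'"
proof -
  have "a - a' = b' - b" using assms(5) by (simp add: algebra_simps)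
  moreover have "a - a' \<in> A0" "b' - b \<in> A1"
    using assms subspace_A0 subspace_A1 by (simp_all add: subspace_diff)
  ultimately have "a - a' = 0" using A0_Int_A1 by (metis IntI singletonD)
  then show "a = a'" by simp
  then show "b = b'" using assms(5) by simp
qed

lemma B_even_or_odd:
  "(\<forall>x\<in>A0. \<forall>y\<in>A1. B x y = 0) \<or> ((\<forall>x\<in>A0. \<forall>y\<in>A0. B x y = 0) \<and> (\<forall>x\<in>A1. \<forall>y\<in>A1. B x y = 0))"
  and B_anticommute_odd: "x \<in> A1 \<Longrightarrow> y \<in> A1 \<Longrightarrow> B x y = - B y x"
  and B_mul_assoc: "B (mul x y) z = B x (mul y z)"
  and B_nondegenerate: "nondeg_on B UNIV"
  using symmetric_structure unfolding homogeneous_symmetric_structure_def by blast+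

lemma B_commute_even: "x \<in> A0 \<Longrightarrow> B x y = B y x"
  using symmetric_structure unfolding homogeneous_symmetric_structure_def
  by (cases y rule: homogeneous_decomposition) (simp add: B_add_left B_add_right)

lemma B_homogeneous_eq_0:
  assumes x: "x \<in> A0 \<union> A1" and "y0 \<in> A0" "y1 \<in> A1"
  shows "B x y0 = 0 \<or> B x y1 = 0"
  using B_even_or_odd
proof
  assume "\<forall>x\<in>A0. \<forall>y\<in>A1. B x y = 0"
  then show ?thesis using assms B_commute_even[of y0 x] by auto
qed (use assms in blast)

lemma B_eq_0_commute:
  assumes x: "x \<in> A0 \<union> A1"
  shows "B y x = 0 \<longleftrightarrow> B x y = 0"
proof (cases "x \<in> A0")
  case True
  then show ?thesis using B_commute_even[of x y] by simp
next
  case False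
  with x have x1: "x \<in> A1" by blast
  obtain y0 y1 where y: "y0 \<in> A0" "y1 \<in> A1" "y = y0 + y1" by (rule homogeneous_decomposition)
  have "B y x = B x y0 - B x y1"
    using y x1 B_commute_even[of y0 x] B_anticommute_odd[of y1 x] by (simp add: B_add_left)
  moreover have "B x y = B x y0 + B x y1" using y by (simp add: B_add_right)
  ultimately show ?thesis using B_homogeneous_eq_0[OF x y(1,2)] by auto
qed

lemma graded_ideal_subspace: "graded_ideal sc mul A0 A1 I \<Longrightarrow> subspace I"
  unfolding graded_ideal_def by blast

lemma graded_ideal_components:
  assumes "graded_ideal sc mul A0 A1 I" "x \<in> I"
  obtains a b where "a \<in> I \<inter> A0" "b \<in> I \<inter> A1" "x = a + b"
  using assms unfolding graded_ideal_def by blast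

lemma graded_ideal_mul:
  "graded_ideal sc mul A0 A1 I \<Longrightarrow> x \<in> I \<Longrightarrow> mul a x \<in> I \<and> mul x a \<in> I"
  unfolding graded_ideal_def by blast

lemma graded_ideal_UNIV: "graded_ideal sc mul A0 A1 UNIV"
  unfolding graded_ideal_def
proof (intro conjI ballI allI impI subspace_UNIV)
  fix v :: 'v
  obtain v0 v1 where "v0 \<in> A0" "v1 \<in> A1" "v = v0 + v1" by (rule homogeneous_decomposition)
  then show "\<exists>a\<in>UNIV \<inter> A0. \<exists>b\<in>UNIV \<inter> A1. v = a + b" by blast
qed simp_all

definition perp :: "'v set \<Rightarrow> 'v set" where
  "perp I = {y. \<forall>x\<in>I. B x y = 0}"

lemma subspace_perp: "subspace (perp I)"
  unfolding perp_def by (rule subspaceI) (auto simp: B_add_right B_scale_right)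

lemma graded_ideal_perp_iff:
  assumes I: "graded_ideal sc mul A0 A1 I"
  shows "y \<in> perp I \<longleftrightarrow> (\<forall>x\<in>I. B y x = 0)"
proof
  assume y: "y \<in> perp I"
  show "\<forall>x\<in>I. B y x = 0"
  proof
    fix x assume "x \<in> I"
    then obtain a b where ab: "a \<in> I \<inter> A0" "b \<in> I \<inter> A1" "x = a + b"
      by (rule graded_ideal_components[OF I])
    then have "B y a = 0" "B y b = 0"
      using y B_eq_0_commute[of a y] B_eq_0_commute[of b y] unfolding perp_def by auto
    then show "B y x = 0" using ab by (simp add: B_add_right)
  qed
next
  assume y: "\<forall>x\<in>I. B y x = 0"
  show "y \<in> perp I" unfolding perp_def
  proof safe
    fix x assume "x \<in> I"
    then obtain a b where ab: "a \<in> I \<inter> A0" "b \<in> I \<inter> A1" "x = a + b"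
      by (rule graded_ideal_components[OF I])
    then have "B a y = 0" "B b y = 0"
      using y B_eq_0_commute[of a y] B_eq_0_commute[of b y] by auto
    then show "B x y = 0" using ab by (simp add: B_add_left)
  qed
qed

lemma graded_ideal_perp:
  assumes I: "graded_ideal sc mul A0 A1 I"
  shows "graded_ideal sc mul A0 A1 (perp I)"
  unfolding graded_ideal_def
proof (intro conjI allI impI ballI subspace_perp)
  fix y assume y: "y \<in> perp I"
  obtain y0 y1 where y01: "y0 \<in> A0" "y1 \<in> A1" "y = y0 + y1" by (rule homogeneous_decomposition)
  have "B x y0 = 0 \<and> B x y1 = 0" if "x \<in> I" for x
  proof -
    obtain a b where ab: "a \<in> I \<inter> A0" "b \<in> I \<inter> A1" "x = a + b"
      using graded_ideal_components[OF I \<open>x \<in> I\<close>] .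
    have "B h y0 = 0 \<and> B h y1 = 0" if "h \<in> I" "h \<in> A0 \<union> A1" for h
      using y \<open>h \<in> I\<close> B_homogeneous_eq_0[OF \<open>h \<in> A0 \<union> A1\<close> y01(1,2)]
      unfolding perp_def y01(3) by (auto simp: B_add_right)
    then show ?thesis using ab by (simp add: B_add_left)
  qed
  then have "y0 \<in> perp I" "y1 \<in> perp I" unfolding perp_def by auto
  then show "\<exists>a\<in>perp I \<inter> A0. \<exists>b\<in>perp I \<inter> A1. y = a + b" using y01 by blast
next
  fix c y assume y: "y \<in> perp I"
  show "mul c y \<in> perp I"
    using y graded_ideal_mul[OF I] unfolding perp_def by (simp flip: B_mul_assoc)
  show "mul y c \<in> perp I"
    using y graded_ideal_mul[OF I] unfolding graded_ideal_perp_iff[OF I] by (simp add: B_mul_assoc)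
qed

lemma graded_ideal_Int:
  assumes I: "graded_ideal sc mul A0 A1 I" and J: "graded_ideal sc mul A0 A1 J"
  shows "graded_ideal sc mul A0 A1 (I \<inter> J)"
  unfolding graded_ideal_def
proof (intro conjI allI impI ballI)
  show "subspace (I \<inter> J)"
    using graded_ideal_subspace[OF I] graded_ideal_subspace[OF J] by (rule subspace_inter)
next
  fix x assume x: "x \<in> I \<inter> J"
  obtain a b where ab: "a \<in> I \<inter> A0" "b \<in> I \<inter> A1" "x = a + b"
    using x graded_ideal_components[OF I] by blast
  obtain a' b' where ab': "a' \<in> J \<inter> A0" "b' \<in> J \<inter> A1" "x = a' + b'"
    using x graded_ideal_components[OF J] by blast
  have "a = a'" "b = b'"
    using homogeneous_decomposition_unique[of a a' b b'] ab ab' by auto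
  then show "\<exists>a\<in>(I \<inter> J) \<inter> A0. \<exists>b\<in>(I \<inter> J) \<inter> A1. x = a + b" using ab ab' by blast
next
  fix a x assume "x \<in> I \<inter> J"
  then show "mul a x \<in> I \<inter> J" "mul x a \<in> I \<inter> J"
    using graded_ideal_mul[OF I] graded_ideal_mul[OF J] by blast+
qed

lemma nondeg_graded_ideal_Int_perp:
  assumes "graded_ideal sc mul A0 A1 I" "nondeg_on B I"
  shows "I \<inter> perp I = {0}"
proof -
  have "x = 0" if "x \<in> I" "x \<in> perp I" for x
    using assms(2) that unfolding nondeg_on_def graded_ideal_perp_iff[OF assms(1)] by blast
  then show ?thesis
    using subspace_0[OF graded_ideal_subspace[OF assms(1)]] subspace_0[OF subspace_perp] by blast
qed

lemma nondeg_graded_ideal_split: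
  assumes "graded_ideal sc mul A0 A1 I" "nondeg_on B I"
  obtains u w where "u \<in> I" "w \<in> perp I" "v = u + w"
  using left_orthogonal_complement[OF graded_ideal_subspace[OF assms(1)] assms(2)]
  unfolding graded_ideal_perp_iff[OF assms(1), symmetric] by blast

lemma nondeg_graded_subideal_split:
  assumes J: "graded_ideal sc mul A0 A1 J" and I: "graded_ideal sc mul A0 A1 I" "nondeg_on B I"
    and "I \<subseteq> J" "v \<in> J"
  obtains u w where "u \<in> I" "w \<in> J \<inter> perp I" "v = u + w"
proof -
  obtain u w where uw: "u \<in> I" "w \<in> perp I" "v = u + w"
    by (rule nondeg_graded_ideal_split[OF I])
  have "w = v - u" using uw(3) by simp
  then have "w \<in> J" using uw(1) assms(4,5) graded_ideal_subspace[OF J] by (auto intro: subspace_diff)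
  with uw that show ?thesis by blast
qed

lemma nondeg_on_Int_perp:
  assumes J: "graded_ideal sc mul A0 A1 J" "nondeg_on B J"
    and I: "graded_ideal sc mul A0 A1 I" "nondeg_on B I" "I \<subseteq> J"
  shows "nondeg_on B (J \<inter> perp I)"
  unfolding nondeg_on_def
proof (intro ballI impI)
  fix y assume y: "y \<in> J \<inter> perp I" and y_perp: "\<forall>z\<in>J \<inter> perp I. B y z = 0"
  have "B y v = 0" if "v \<in> J" for v
  proof -
    obtain u w where "u \<in> I" "w \<in> J \<inter> perp I" "v = u + w"
      using nondeg_graded_subideal_split[OF J(1) I \<open>v \<in> J\<close>] .
    then show ?thesis using y y_perp graded_ideal_perp_iff[OF I(1)] by (simp add: B_add_right)
  qed
  then show "y = 0" using J(2) y unfolding nondeg_on_def by blast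
qed

lemma exists_B_irreducible_subideal:
  assumes "graded_ideal sc mul A0 A1 J" "nondeg_on B J" "J \<noteq> {0}"
  obtains I where "B_irreducible sc mul A0 A1 B I" "I \<subseteq> J" "I \<noteq> {0}"
proof -
  let ?C = "{I. graded_ideal sc mul A0 A1 I \<and> nondeg_on B I \<and> I \<subseteq> J \<and> I \<noteq> {0}}"
  obtain I where I: "I \<in> ?C" and least: "\<And>K. K \<in> ?C \<Longrightarrow> dim I \<le> dim K"
    using ex_has_least_nat[of "\<lambda>I. I \<in> ?C" J dim] assms by blast
  have "B_irreducible sc mul A0 A1 B I"
    unfolding B_irreducible_def
  proof (intro conjI allI impI)
    fix K assume K: "graded_ideal sc mul A0 A1 K \<and> nondeg_on B K \<and> K \<subseteq> I"
    show "K = {0} \<or> K = I"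
    proof (cases "K = {0}")
      case False
      then have "K \<in> ?C" using K I by auto
      then have "dim I \<le> dim K" by (rule least)
      moreover have "subspace K" "subspace I" using K I graded_ideal_subspace by auto
      ultimately show ?thesis using K subspace_dim_equal by blast
    qed simp
  qed (use I in auto)
  with I show ?thesis using that by blast
qed

definition orthogonal_decomposition :: "'v set \<Rightarrow> 'v set set \<Rightarrow> bool" where
  "orthogonal_decomposition J \<I> \<longleftrightarrow> finite \<I> \<and>
     (\<forall>I\<in>\<I>. B_irreducible sc mul A0 A1 B I \<and> I \<subseteq> J) \<and>
     pairwise (\<lambda>I K. \<forall>x\<in>I. \<forall>y\<in>K. B x y = 0) \<I> \<and>
     (\<forall>v\<in>J. \<exists>f. (\<forall>I\<in>\<I>. f I \<in> I) \<and> v = (\<Sum>I\<in>\<I>. f I))"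

lemma orthogonal_decomposition_insert:
  assumes J: "graded_ideal sc mul A0 A1 J"
    and I: "B_irreducible sc mul A0 A1 B I" "I \<subseteq> J" "I \<noteq> {0}"
    and dec: "orthogonal_decomposition (J \<inter> perp I) \<I>"
  shows "orthogonal_decomposition J (insert I \<I>)"
proof -
  have gI: "graded_ideal sc mul A0 A1 I" and nI: "nondeg_on B I"
    using I(1) unfolding B_irreducible_def by blast+
  have fin: "finite \<I>" and irr: "\<forall>K\<in>\<I>. B_irreducible sc mul A0 A1 B K \<and> K \<subseteq> J \<inter> perp I"
    and orth: "pairwise (\<lambda>I K. \<forall>x\<in>I. \<forall>y\<in>K. B x y = 0) \<I>"
    and rep: "\<forall>v\<in>J \<inter> perp I. \<exists>f. (\<forall>I\<in>\<I>. f I \<in> I) \<and> v = (\<Sum>I\<in>\<I>. f I)"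
    using dec unfolding orthogonal_decomposition_def by blast+
  have "I \<notin> \<I>"
    using irr I(3) nondeg_graded_ideal_Int_perp[OF gI nI] by blast
  have "(\<forall>x\<in>I. \<forall>y\<in>K. B x y = 0) \<and> (\<forall>x\<in>K. \<forall>y\<in>I. B x y = 0)" if "K \<in> \<I>" for K
    using irr that graded_ideal_perp_iff[OF gI] unfolding perp_def by blast
  then have "pairwise (\<lambda>I K. \<forall>x\<in>I. \<forall>y\<in>K. B x y = 0) (insert I \<I>)"
    using orth unfolding pairwise_insert by blast
  moreover have "\<exists>f. (\<forall>K\<in>insert I \<I>. f K \<in> K) \<and> v = (\<Sum>K\<in>insert I \<I>. f K)" if "v \<in> J" for v
  proof -
    obtain u w where uw: "u \<in> I" "w \<in> J \<inter> perp I" "v = u + w"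
      using nondeg_graded_subideal_split[OF J gI nI I(2) \<open>v \<in> J\<close>] .
    then obtain f where f: "\<forall>K\<in>\<I>. f K \<in> K" "w = (\<Sum>K\<in>\<I>. f K)" using rep by blast
    have "(\<Sum>K\<in>insert I \<I>. (f(I := u)) K) = u + w"
      using fin \<open>I \<notin> \<I>\<close> f(2) by (simp add: sum.insert) (intro sum.cong, auto)
    then show ?thesis using f(1) uw \<open>I \<notin> \<I>\<close> by (intro exI[of _ "f(I := u)"]) auto
  qed
  ultimately show ?thesis
    using fin irr I unfolding orthogonal_decomposition_def by auto
qed

lemma exists_orthogonal_decomposition:
  assumes "graded_ideal sc mul A0 A1 J" "nondeg_on B J"
  shows "\<exists>\<I>. orthogonal_decomposition J \<I>"
  using assms
proof (induction "dim J" arbitrary: J rule: less_induct)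
  case less
  show ?case
  proof (cases "J = {0}")
    case True
    then have "orthogonal_decomposition J {}" unfolding orthogonal_decomposition_def by simp
    then show ?thesis ..
  next
    case False
    obtain I where I: "B_irreducible sc mul A0 A1 B I" "I \<subseteq> J" "I \<noteq> {0}"
      using exists_B_irreducible_subideal[OF less.prems False] .
    have gI: "graded_ideal sc mul A0 A1 I" and nI: "nondeg_on B I"
      using I(1) unfolding B_irreducible_def by blast+
    let ?J' = "J \<inter> perp I"
    have gJ': "graded_ideal sc mul A0 A1 ?J'"
      using graded_ideal_Int[OF less.prems(1) graded_ideal_perp[OF gI]] .
    have nJ': "nondeg_on B ?J'"
      using nondeg_on_Int_perp[OF less.prems gI nI I(2)] .
    have "?J' \<subset> J"
      using I(2,3) nondeg_graded_ideal_Int_perp[OF gI nI] by blast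
    then have "dim ?J' < dim J"
      using graded_ideal_subspace[OF gJ'] graded_ideal_subspace[OF less.prems(1)]
      by (intro dim_psubset) (simp add: span_eq_iff[THEN iffD2])
    then obtain \<I> where "orthogonal_decomposition ?J' \<I>" using less.hyps gJ' nJ' by blast
    then show ?thesis using orthogonal_decomposition_insert[OF less.prems(1) I] by blast
  qed
qed

lemma orthogonal_decomposition_components:
  assumes dec: "orthogonal_decomposition J \<I>" and "v \<in> J"
  shows "\<exists>!f. (\<forall>I\<in>\<I>. f I \<in> I) \<and> (\<forall>I. I \<notin> \<I> \<longrightarrow> f I = 0) \<and> v = (\<Sum>I\<in>\<I>. f I)"
proof -
  have fin: "finite \<I>"
    and irr: "\<And>I. I \<in> \<I> \<Longrightarrow> B_irreducible sc mul A0 A1 B I"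
    and orth: "pairwise (\<lambda>I K. \<forall>x\<in>I. \<forall>y\<in>K. B x y = 0) \<I>"
    using dec unfolding orthogonal_decomposition_def by blast+
  obtain f where f: "\<forall>I\<in>\<I>. f I \<in> I" "v = (\<Sum>I\<in>\<I>. f I)"
    using dec \<open>v \<in> J\<close> unfolding orthogonal_decomposition_def by blast
  have sub: "subspace I" and nondeg: "nondeg_on B I" if "I \<in> \<I>" for I
    using irr[OF that] graded_ideal_subspace unfolding B_irreducible_def by blast+
  show ?thesis
  proof (rule ex1I[of _ "\<lambda>I. if I \<in> \<I> then f I else 0"], use f in simp)
    fix g assume g: "(\<forall>I\<in>\<I>. g I \<in> I) \<and> (\<forall>I. I \<notin> \<I> \<longrightarrow> g I = 0) \<and> v = (\<Sum>I\<in>\<I>. g I)"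
    show "g = (\<lambda>I. if I \<in> \<I> then f I else 0)"
    proof
      fix I show "g I = (if I \<in> \<I> then f I else 0)"
        using g f orthogonal_sum_unique[OF fin sub nondeg orth, of g f I] by auto
    qed
  qed
qed

end

theorem mainTheorem7:
  fixes sc :: "'k::{alg_closed_field, field_char_0} \<Rightarrow> 'v::ab_group_add \<Rightarrow> 'v"
    and mul :: "'v \<Rightarrow> 'v \<Rightarrow> 'v"
    and A0 A1 :: "'v set"
    and B :: "'v \<Rightarrow> 'v \<Rightarrow> 'k"
  assumes "fin_dim_assoc_superalgebra sc mul A0 A1"
    and "homogeneous_symmetric_structure sc mul A0 A1 B"
  shows "\<exists>\<I>. finite \<I> \<and>
           (\<forall>I\<in>\<I>. B_irreducible sc mul A0 A1 B I) \<and>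
           (\<forall>I\<in>\<I>. \<forall>J\<in>\<I>. I \<noteq> J \<longrightarrow> (\<forall>x\<in>I. \<forall>y\<in>J. B x y = 0)) \<and>
           (\<forall>v. \<exists>!f. (\<forall>I\<in>\<I>. f I \<in> I) \<and> (\<forall>I. I \<notin> \<I> \<longrightarrow> f I = 0) \<and>
                     v = (\<Sum>I\<in>\<I>. f I))"
proof -
  obtain Basis where "finite_dimensional_vector_space sc Basis"
    using assms(1) unfolding fin_dim_assoc_superalgebra_def by blast
  then interpret superalgebra_with_symmetric_structure sc Basis mul A0 A1 B
    using assms by (simp add: superalgebra_with_symmetric_structure_def
        superalgebra_with_symmetric_structure_axioms_def)
  obtain \<I> where dec: "orthogonal_decomposition UNIV \<I>"
    using exists_orthogonal_decomposition[OF graded_ideal_UNIV B_nondegenerate] by blast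
  show ?thesis
  proof (intro exI[of _ \<I>] conjI allI)
    show "finite \<I>" "\<forall>I\<in>\<I>. B_irreducible sc mul A0 A1 B I"
      "\<forall>I\<in>\<I>. \<forall>J\<in>\<I>. I \<noteq> J \<longrightarrow> (\<forall>x\<in>I. \<forall>y\<in>J. B x y = 0)"
      using dec unfolding orthogonal_decomposition_def pairwise_def by auto
    show "\<exists>!f. (\<forall>I\<in>\<I>. f I \<in> I) \<and> (\<forall>I. I \<notin> \<I> \<longrightarrow> f I = 0) \<and> v = (\<Sum>I\<in>\<I>. f I)" for v
      using orthogonal_decomposition_components[OF dec UNIV_I] .
  qed
qed

end
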